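(* Let $d\geq 1$ and let $F\in C^1(\mathbb{R}^d)^d$ satisfy $F(x+k)=F(x)+k$ for all $k\in\mathbb{Z}^d$ and $x\in\mathbb{R}^d$. Suppose there exists a $\mathbb{Z}^d$-periodic vector field $b\in C^1(\mathbb{R}^d)^d$ such that $F=X(1,\cdot)$, where $X$ is the flow of $b$. Then $$(\nabla F(x))\,b(x)=b(F(x))\quad\text{for all }x\in\mathbb{R}^d .$$ Moreover, for every $a\in\mathbb{R}^d$ such that $F(a)-a\in\mathbb{Z}^d$ and $\det(\nabla F(a)-I_d)\neq 0$, one has $b(a)=0_{\mathbb{R}^d}$.
   Context: For a $\mathbb{Z}^d$-periodic $b\in C^1(\mathbb{R}^d)^d$, the flow $X:\mathbb{R}\times\mathbb{R}^d\to\mathbb{R}^d$ is defined by $\partial_t X(t,x)=b(X(t,x))$, $X(0,x)=x$. $\nabla F$ denotes the Jacobian matrix of $F$ and $I_d$ the identity matrix. *)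

theory Defs
  imports "HOL-Analysis.Analysis"
begin

definition integer_vector :: "real^'n \<Rightarrow> bool" where
  "integer_vector k \<longleftrightarrow> (\<forall>i. k $ i \<in> \<int>)"

end

theory Submission
  imports Defs
begin

text \<open>
  Since \<open>b\<close> is \<open>C\<^sup>1\<close>, it is Lipschitz on bounded sets, so solutions of \<open>x' = b x\<close> are unique
  (Gronwall). Hence the flow has the group property \<open>X s \<circ> X t = X (s + t)\<close>, and the time-one
  map \<open>F\<close> commutes with every \<open>X t\<close>. Differentiating \<open>F (X t x) = X t (F x)\<close> at \<open>t = 0\<close> gives
  \<open>DF x b x = b (F x)\<close>. If \<open>F a - a\<close> is an integer vector, periodicity gives \<open>b (F a) = b a\<close>,
  so \<open>b a\<close> is a fixed vector of \<open>DF a\<close>, which must vanish when \<open>DF a - I\<close> is invertible.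
\<close>

lemma has_vector_derivative_compose_affine:
  fixes u :: "real \<Rightarrow> 'a::real_normed_vector"
  assumes "(u has_vector_derivative v) (at (c * t + s))"
  shows "((\<lambda>t. u (c * t + s)) has_vector_derivative c *\<^sub>R v) (at t)"
proof -
  have "((\<lambda>t. c * t + s) has_vector_derivative c) (at t)"
    by (auto intro!: derivative_eq_intros)
  from vector_diff_chain_at[OF this assms] show ?thesis
    by (simp add: o_def)
qed

lemma onorm_matrix_vector_mult_le:
  fixes A :: "real^'n^'m"
  shows "onorm ((*v) A) \<le> real CARD('m) * real CARD('n) * norm A"
proof (rule onorm_le_matrix_component)
  fix i j
  show "\<bar>A $ i $ j\<bar> \<le> norm A"
    using component_le_norm_cart[of "A $ i" j] Finite_Cartesian_Product.norm_nth_le[of A i]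
    by (meson order_trans)
qed

lemma C1_lipschitz_on_compact_convex:
  fixes f :: "real^'n \<Rightarrow> real^'m" and D :: "real^'n \<Rightarrow> real^'n^'m"
  assumes "compact S" "convex S"
    and f': "\<And>x. x \<in> S \<Longrightarrow> (f has_derivative (\<lambda>h. D x *v h)) (at x within S)"
    and D_cont: "continuous_on S D"
  obtains L where "L-lipschitz_on S f"
proof -
  obtain M where M: "\<And>x. x \<in> S \<Longrightarrow> norm (D x) \<le> M"
    using compact_imp_bounded[OF compact_continuous_image[OF D_cont \<open>compact S\<close>]]
    by (auto simp: bounded_iff)
  define L where "L = real CARD('m) * real CARD('n) * max M 0"
  have "norm (f u - f v) \<le> L * norm (u - v)" if "u \<in> S" "v \<in> S" for u v
  proof (rule differentiable_bound[OF \<open>convex S\<close> f' _ that])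
    fix x assume "x \<in> S"
    have "onorm ((*v) (D x)) \<le> real CARD('m) * real CARD('n) * norm (D x)"
      by (rule onorm_matrix_vector_mult_le)
    also have "\<dots> \<le> L"
      unfolding L_def using M[OF \<open>x \<in> S\<close>] by (intro mult_left_mono) auto
    finally show "onorm (\<lambda>h. D x *v h) \<le> L" .
  qed
  then have "L-lipschitz_on S f"
    by (intro lipschitz_onI) (auto simp: dist_norm L_def)
  then show ?thesis by (rule that)
qed

lemma lipschitz_ode_solutions_eq_forward:
  fixes f :: "'a::real_inner \<Rightarrow> 'a" and y z :: "real \<Rightarrow> 'a"
  assumes lip: "L-lipschitz_on S f"
    and y_in: "y ` {0..T} \<subseteq> S" and z_in: "z ` {0..T} \<subseteq> S"
    and y': "\<And>t. t \<in> {0..T} \<Longrightarrow> (y has_vector_derivative f (y t)) (at t)"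
    and z': "\<And>t. t \<in> {0..T} \<Longrightarrow> (z has_vector_derivative f (z t)) (at t)"
    and init: "y 0 = z 0" and "0 \<le> T"
  shows "y T = z T"
proof -
  define w where "w s = (y s - z s) \<bullet> (y s - z s)" for s
  define w' where "w' s = 2 * ((y s - z s) \<bullet> (f (y s) - f (z s)))" for s
  have w_deriv: "(w has_real_derivative w' s) (at s)" if "s \<in> {0..T}" for s
  proof -
    have "((\<lambda>s. y s - z s) has_vector_derivative f (y s) - f (z s)) (at s)"
      using y'[OF that] z'[OF that] by (rule has_vector_derivative_diff)
    then have "((\<lambda>s. y s - z s) has_derivative (\<lambda>h. h *\<^sub>R (f (y s) - f (z s)))) (at s)"
      by (simp add: has_vector_derivative_def)
    from has_derivative_inner[OF this this] show ?thesis
      unfolding w_def w'_def has_field_derivative_def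
      by (rule has_derivative_eq_rhs) (auto simp: inner_commute algebra_simps)
  qed
  have w'_le: "w' s \<le> 2 * L * w s" if "s \<in> {0..T}" for s
  proof -
    have "norm (f (y s) - f (z s)) \<le> L * norm (y s - z s)"
      using y_in z_in that by (intro lipschitz_on_normD[OF lip]) auto
    then have "(y s - z s) \<bullet> (f (y s) - f (z s)) \<le> norm (y s - z s) * (L * norm (y s - z s))"
      by (meson norm_cauchy_schwarz mult_left_mono norm_ge_zero order_trans)
    then show ?thesis
      by (simp add: w_def w'_def power2_norm_eq_inner[symmetric] power2_eq_square algebra_simps)
  qed
  \<comment> \<open>Gronwall: \<open>g\<close> is nonincreasing, vanishes at 0 and is nonnegative.\<close>
  define g where "g s = exp (-2 * L * s) * w s" for s
  have "g T \<le> g 0"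
  proof (rule DERIV_nonpos_imp_nonincreasing[OF \<open>0 \<le> T\<close>])
    fix s assume "0 \<le> s" "s \<le> T"
    then have s: "s \<in> {0..T}" by simp
    have "(g has_real_derivative exp (-2 * L * s) * (w' s - 2 * L * w s)) (at s)"
      unfolding g_def
      by (rule derivative_eq_intros w_deriv[OF s] refl | simp add: algebra_simps)+
    moreover have "exp (-2 * L * s) * (w' s - 2 * L * w s) \<le> 0"
      using w'_le[OF s] by (simp add: mult_nonneg_nonpos)
    ultimately show "\<exists>d. (g has_real_derivative d) (at s) \<and> d \<le> 0" by blast
  qed
  also have "g 0 = 0" by (simp add: g_def w_def init)
  finally have "w T \<le> 0"
    by (simp add: g_def mult_le_0_iff)
  then show ?thesis by (simp add: w_def not_less[symmetric])
qed

lemma ode_solutions_eq_forward: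
  fixes f :: "'a::real_inner \<Rightarrow> 'a" and y z :: "real \<Rightarrow> 'a"
  assumes lip: "\<And>R. \<exists>L. L-lipschitz_on (cball 0 R) f"
    and y': "\<And>t. (y has_vector_derivative f (y t)) (at t)"
    and z': "\<And>t. (z has_vector_derivative f (z t)) (at t)"
    and init: "y 0 = z 0" and "0 \<le> T"
  shows "y T = z T"
proof -
  have "continuous_on {0..T} y" "continuous_on {0..T} z"
    using y' z' by (auto intro!: continuous_at_imp_continuous_on has_vector_derivative_continuous)
  then have "bounded (y ` {0..T} \<union> z ` {0..T})"
    by (intro compact_imp_bounded compact_Un compact_continuous_image) auto
  then obtain R where R: "\<And>p. p \<in> y ` {0..T} \<union> z ` {0..T} \<Longrightarrow> norm p \<le> R"
    by (auto simp: bounded_iff)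
  obtain L where "L-lipschitz_on (cball 0 R) f"
    using lip by blast
  moreover have "y ` {0..T} \<subseteq> cball 0 R" "z ` {0..T} \<subseteq> cball 0 R"
    using R by auto
  ultimately show ?thesis
    using y' z' init \<open>0 \<le> T\<close> by (rule lipschitz_ode_solutions_eq_forward)
qed

lemma ode_solutions_eq:
  fixes f :: "'a::real_inner \<Rightarrow> 'a" and y z :: "real \<Rightarrow> 'a"
  assumes lip: "\<And>R. \<exists>L. L-lipschitz_on (cball 0 R) f"
    and y': "\<And>t. (y has_vector_derivative f (y t)) (at t)"
    and z': "\<And>t. (z has_vector_derivative f (z t)) (at t)"
    and init: "y 0 = z 0"
  shows "y T = z T"
proof (cases "0 \<le> T")
  case True
  with assms show ?thesis by (rule ode_solutions_eq_forward)
next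
  case False
  have reversed: "((\<lambda>t. u (- t)) has_vector_derivative - f (u (- t))) (at t)"
    if "\<And>t. (u has_vector_derivative f (u t)) (at t)" for u :: "real \<Rightarrow> 'a" and t
    using has_vector_derivative_compose_affine[of u "f (u (- t))" "- 1" t 0] that by simp
  have "\<And>R. \<exists>L. L-lipschitz_on (cball 0 R) (\<lambda>x. - f x)"
    using lip by simp
  from ode_solutions_eq_forward[OF this reversed[OF y'] reversed[OF z'], of "- T"]
  show ?thesis using init False by simp
qed

lemma flow_add:
  fixes X :: "real \<Rightarrow> 'a::real_inner \<Rightarrow> 'a"
  assumes lip: "\<And>R. \<exists>L. L-lipschitz_on (cball 0 R) f"
    and X': "\<And>t x. ((\<lambda>s. X s x) has_vector_derivative f (X t x)) (at t)"
    and X0: "\<And>x. X 0 x = x"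
  shows "X s (X t x) = X (s + t) x"
proof -
  have "((\<lambda>s. X (s + t) x) has_vector_derivative f (X (s + t) x)) (at s)" for s
    using has_vector_derivative_compose_affine[of "\<lambda>r. X r x" _ 1 s t] X' by simp
  from ode_solutions_eq[OF lip X' this] show ?thesis
    by (simp add: X0)
qed

lemma derivative_intertwines_flows:
  fixes F :: "'a::real_normed_vector \<Rightarrow> 'b::real_normed_vector"
    and X :: "real \<Rightarrow> 'a \<Rightarrow> 'a" and Y :: "real \<Rightarrow> 'b \<Rightarrow> 'b"
  assumes F': "(F has_derivative F') (at x)"
    and X': "((\<lambda>t. X t x) has_vector_derivative b x) (at 0)" and X0: "X 0 x = x"
    and Y': "((\<lambda>t. Y t (F x)) has_vector_derivative c (F x)) (at 0)"
    and conj: "\<And>t. F (X t x) = Y t (F x)"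
  shows "F' (b x) = c (F x)"
proof -
  have "((\<lambda>t. X t x) has_derivative (\<lambda>h. h *\<^sub>R b x)) (at 0)"
    using X' by (simp add: has_vector_derivative_def)
  moreover have "(F has_derivative F') (at (X 0 x))"
    using F' by (simp add: X0)
  ultimately have "((\<lambda>t. F (X t x)) has_derivative (\<lambda>h. F' (h *\<^sub>R b x))) (at 0)"
    using diff_chain_at by (fastforce simp: o_def)
  then have "((\<lambda>t. Y t (F x)) has_vector_derivative F' (b x)) (at 0)"
    using has_derivative_bounded_linear[OF F']
    by (simp add: conj has_vector_derivative_def linear_simps)
  from this Y' show ?thesis
    by (rule vector_derivative_unique_at)
qed

lemma fixed_vector_eq_0:
  fixes A :: "real^'n^'n"
  assumes "det (A - mat 1) \<noteq> 0" and "A *v v = v"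
  shows "v = 0"
proof -
  have "inj ((*v) (A - mat 1))"
    using assms(1) invertible_det_nz inj_matrix_vector_mult by blast
  moreover have "(A - mat 1) *v v = (A - mat 1) *v 0"
    using assms(2) by (simp add: matrix_vector_mult_diff_rdistrib)
  ultimately show ?thesis
    by (rule injD)
qed

theorem proposition2p1:
  fixes F b :: "real^'n \<Rightarrow> real^'n"
    and DF Db :: "real^'n \<Rightarrow> real^'n^'n"
    and X :: "real \<Rightarrow> real^'n \<Rightarrow> real^'n"
  assumes F_deriv: "\<And>x. (F has_derivative (\<lambda>h. DF x *v h)) (at x)"
    and F_C1: "continuous_on UNIV DF"
    and F_shift: "\<And>x k. integer_vector k \<Longrightarrow> F (x + k) = F x + k"
    and b_deriv: "\<And>x. (b has_derivative (\<lambda>h. Db x *v h)) (at x)"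
    and b_C1: "continuous_on UNIV Db"
    and b_periodic: "\<And>x k. integer_vector k \<Longrightarrow> b (x + k) = b x"
    and X_ode: "\<And>t x. ((\<lambda>s. X s x) has_vector_derivative b (X t x)) (at t)"
    and X_init: "\<And>x. X 0 x = x"
    and F_time1: "\<And>x. F x = X 1 x"
  shows "(\<forall>x. DF x *v b x = b (F x)) \<and>
         (\<forall>a. integer_vector (F a - a) \<and> det (DF a - mat 1) \<noteq> 0 \<longrightarrow> b a = 0)"
proof -
  have b_lip: "\<exists>L. L-lipschitz_on (cball 0 R) b" for R
    using b_deriv b_C1
    by (meson C1_lipschitz_on_compact_convex compact_cball convex_cball
        has_derivative_at_withinI continuous_on_subset subset_UNIV)
  have F_comm: "F (X t x) = X t (F x)" for t x
    using flow_add[OF b_lip X_ode X_init, of 1 t x] flow_add[OF b_lip X_ode X_init, of t 1 x]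
    by (simp add: F_time1 add.commute)
  have equivariant: "DF x *v b x = b (F x)" for x
  proof -
    have "((\<lambda>t. X t y) has_vector_derivative b y) (at 0)" for y
      using X_ode[where t = 0 and x = y] by (simp add: X_init)
    from derivative_intertwines_flows[where X = X and Y = X and b = b and c = b,
        OF F_deriv this X_init this F_comm]
    show ?thesis .
  qed
  moreover have "b a = 0" if "integer_vector (F a - a)" "det (DF a - mat 1) \<noteq> 0" for a
    using fixed_vector_eq_0[OF that(2)] equivariant[of a] b_periodic[OF that(1), of a] by simp
  ultimately show ?thesis
    by blast
qed

end
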